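(* Let $p\in[1,\infty]$ and $q$ with $\frac1p+\frac1q=1$. Let $f=(f_i)_{i\in\mathbb N}\in\ell_q$ with $f_i\ge0$ for all $i$, and let $(t_i)_{i\in\mathbb N}$ satisfy $0\le t_i\le 1$ for all $i$ and $\limsup_{i\to\infty}t_i<1$. Define bounded operators on $\ell_p$ by $Fx=\big(\sum_{i=1}^\infty f_ix_i,0,0,\dots\big)$ and $Tx=(0,t_1x_1,t_2x_2,\dots)$, and let $A=T+F$. Then $F$ is bounded and preserves $\ell_p^+=\{x\in\ell_p:x_i\ge0\ \forall i\}$, and $$R_0:=r\big(F(I-T)^{-1}\big)=f_1+\sum_{i=2}^\infty f_i\prod_{j=1}^{i-1}t_j,$$ and exactly one of the following holds: $R_0\ge r(A)>1$; $R_0=r(A)=1$; $R_0\le r(A)<1$.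
   Context: $r(\cdot)$ denotes the spectral radius (of the complexified operator). $\ell_p^+$ is a generating and normal cone in $\ell_p$. *)

theory Defs
  imports "HOL-Analysis.Analysis" "HOL-Library.Extended_Nonnegative_Real" "HOL-Library.Liminf_Limsup"
begin

text \<open>Sequences are indexed by nat starting at 0; the paper's index i corresponds to i - 1 here.
  The exponent p ranges over [1, infinity] and is an extended nonnegative real.\<close>

definition lp_space :: "ennreal \<Rightarrow> (nat \<Rightarrow> 'a::real_normed_vector) set" where
  "lp_space p = (if p = \<infinity> then {x. bounded (range x)}
                 else {x. summable (\<lambda>i. norm (x i) powr enn2real p)})"

definition lp_norm :: "ennreal \<Rightarrow> (nat \<Rightarrow> 'a::real_normed_vector) \<Rightarrow> real" where
  "lp_norm p x = (if p = \<infinity> then (SUP i. norm (x i))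
                  else (\<Sum>i. norm (x i) powr enn2real p) powr (1 / enn2real p))"

definition bounded_lp_op :: "ennreal \<Rightarrow> ((nat \<Rightarrow> real) \<Rightarrow> (nat \<Rightarrow> real)) \<Rightarrow> bool" where
  "bounded_lp_op p L \<longleftrightarrow>
     (\<forall>x\<in>lp_space p. L x \<in> lp_space p) \<and>
     (\<forall>x\<in>lp_space p. \<forall>y\<in>lp_space p. L (\<lambda>i. x i + y i) = (\<lambda>i. L x i + L y i)) \<and>
     (\<forall>x\<in>lp_space p. \<forall>a::real. L (\<lambda>i. a * x i) = (\<lambda>i. a * L x i)) \<and>
     (\<exists>C. \<forall>x\<in>lp_space p. lp_norm p (L x) \<le> C * lp_norm p x)"

definition lp_plus :: "ennreal \<Rightarrow> (nat \<Rightarrow> real) set" where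
  "lp_plus p = {x \<in> lp_space p. \<forall>i. 0 \<le> x i}"

definition preserves_cone :: "ennreal \<Rightarrow> ((nat \<Rightarrow> real) \<Rightarrow> (nat \<Rightarrow> real)) \<Rightarrow> bool" where
  "preserves_cone p L \<longleftrightarrow> (\<forall>x\<in>lp_plus p. L x \<in> lp_plus p)"

definition complexify :: "((nat \<Rightarrow> real) \<Rightarrow> (nat \<Rightarrow> real)) \<Rightarrow> (nat \<Rightarrow> complex) \<Rightarrow> (nat \<Rightarrow> complex)" where
  "complexify L z = (\<lambda>i. Complex (L (\<lambda>j. Re (z j)) i) (L (\<lambda>j. Im (z j)) i))"

text \<open>Spectrum of the complexified operator on the complex l_p: lambda such that
  lambda I - L_C is not a bijection of l_p(C) (bounded inverse is automatic by the open mapping theorem).\<close>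
definition lp_spectrum :: "ennreal \<Rightarrow> ((nat \<Rightarrow> real) \<Rightarrow> (nat \<Rightarrow> real)) \<Rightarrow> complex set" where
  "lp_spectrum p L = {l. \<not> bij_betw (\<lambda>z i. l * z i - complexify L z i)
                                      (lp_space p) (lp_space p)}"

definition spectral_radius :: "ennreal \<Rightarrow> ((nat \<Rightarrow> real) \<Rightarrow> (nat \<Rightarrow> real)) \<Rightarrow> real" where
  "spectral_radius p L = Sup (cmod ` lp_spectrum p L)"

end

theory Submission
  imports Defs
begin

text \<open>
  Eventually t_j <= c < 1, so for |l| > c the weighted shift T has the explicit resolvent
  ((l - T)^-1 w)_i = sum_(k <= i) t_k ... t_(i-1) w_k / l^(i-k+1), whose kernel is dominated by a
  geometric one and hence bounded on l_p. As F = e_0 (x) f has rank one, for such l the operator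
  l - A is invertible iff char_series l = <f, (l - T)^-1 e_0> = sum_k coef_k / l^(k+1) differs
  from 1, where coef_k = f_k t_0 ... t_(k-1) >= 0; conversely, for every nonzero regular value l
  the solution of (l - A) z = e_0 is geometric, so char_series l converges and differs from 1.
  On the positive axis char_series (1/m) = m gf(m) with gf(m) = sum_k coef_k m^k increasing, and
  |char_series l| <= char_series |l|. Hence r(A) = 1/m for the root of m gf(m) = 1 if
  R0 = gf(1) >= 1, and R0 <= r(A) < 1 otherwise; comparing m gf(m) with m gf(1) = m R0 gives the
  trichotomy. Finally F (I - T)^-1 is again of rank one,
  z |-> <f, (I - T)^-1 z> e_0, with spectrum {0, R0}.
\<close>

lemma conjugate_exponent_cases:
  assumes "1 \<le> p" "1/p + 1/q = (1::ennreal)"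
  shows "(p = \<infinity> \<and> q = 1) \<or> (p = 1 \<and> q = \<infinity>) \<or>
     (\<exists>P Q. p = ennreal P \<and> q = ennreal Q \<and> 1 < P \<and> 1 < Q \<and> 1/P + 1/Q = 1)"
proof (cases "p = \<infinity> \<or> q = \<infinity>")
  case True
  then show ?thesis using assms(2) by (auto simp: divide_eq_1_ennreal)
next
  case False
  then obtain P Q where P: "p = ennreal P" "P \<ge> 1" and Q: "q = ennreal Q" "Q \<ge> 0"
    using assms(1) by (cases p; cases q) (auto simp flip: ennreal_1)
  have "Q \<noteq> 0"
  proof
    assume "Q = 0"
    then have "1/q = \<infinity>" using Q by (simp add: divide_ennreal_def)
    then show False using assms(2) by simp
  qed
  then have "1/p = ennreal (1/P)" "1/q = ennreal (1/Q)"
    using P Q divide_ennreal[of 1 P] divide_ennreal[of 1 Q] by auto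
  then have "ennreal (1/P + 1/Q) = ennreal 1"
    using assms(2) P Q by (simp add: ennreal_plus[symmetric] del: ennreal_plus)
  then have PQ: "1/P + 1/Q = 1"
    using P Q by (subst (asm) ennreal_inj) auto
  moreover have "1/P > 0" "1/Q > 0" using P Q \<open>Q \<noteq> 0\<close> by auto
  ultimately have "1/P < 1" "1/Q < 1" by linarith+
  then have "P > 1" "Q > 1" using P \<open>1/Q > 0\<close> by (auto simp: divide_less_eq)
  then show ?thesis using P Q PQ by blast
qed

lemma lp_space_finite_iff:
  "p \<noteq> \<infinity> \<Longrightarrow> x \<in> lp_space p \<longleftrightarrow> summable (\<lambda>i. norm (x i) powr enn2real p)"
  by (simp add: lp_space_def)

lemma lp_space_infinite_iff:
  "p = \<infinity> \<Longrightarrow> x \<in> lp_space p \<longleftrightarrow> (\<exists>B. \<forall>i. norm (x i) \<le> B)"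
  by (auto simp: lp_space_def bounded_iff)

lemma lp_space_mono:
  fixes x :: "nat \<Rightarrow> 'a::real_normed_vector" and y :: "nat \<Rightarrow> 'b::real_normed_vector"
  assumes "x \<in> lp_space p" "\<And>i. norm (y i) \<le> norm (x i)"
  shows "y \<in> lp_space p"
proof (cases "p = \<infinity>")
  case True
  then show ?thesis using assms by (auto simp: lp_space_infinite_iff intro: order_trans)
next
  case False
  have "summable (\<lambda>i. norm (y i) powr enn2real p)"
    by (rule summable_comparison_test[OF _ assms(1)[unfolded lp_space_finite_iff[OF False]]])
      (use assms(2) in \<open>auto intro!: powr_mono2\<close>)
  then show ?thesis using False by (simp add: lp_space_finite_iff)
qed

lemma lp_space_norm_iff: "x \<in> lp_space p \<longleftrightarrow> (\<lambda>i. norm (x i)) \<in> lp_space p"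
  using lp_space_mono[of x p "\<lambda>i. norm (x i)"] lp_space_mono[of "\<lambda>i. norm (x i)" p x] by auto

lemma lp_space_Re: "z \<in> lp_space p \<Longrightarrow> (\<lambda>i. Re (z i)) \<in> lp_space p"
  by (rule lp_space_mono) (auto simp: abs_Re_le_cmod)

lemma lp_space_Im: "z \<in> lp_space p \<Longrightarrow> (\<lambda>i. Im (z i)) \<in> lp_space p"
  by (rule lp_space_mono) (auto simp: abs_Im_le_cmod)

lemma lp_space_mult:
  fixes x :: "nat \<Rightarrow> 'a::real_normed_algebra"
  assumes "x \<in> lp_space p"
  shows "(\<lambda>i. c * x i) \<in> lp_space p"
proof (cases "p = \<infinity>")
  case True
  then obtain B where "\<forall>i. norm (x i) \<le> B" using assms by (auto simp: lp_space_infinite_iff)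
  then have "\<forall>i. norm (c * x i) \<le> norm c * B"
    by (meson norm_ge_zero norm_mult_ineq mult_left_mono order_trans)
  then show ?thesis using True by (auto simp: lp_space_infinite_iff)
next
  case False
  have "summable (\<lambda>i. (norm c * norm (x i)) powr enn2real p)"
    using assms False by (simp add: lp_space_finite_iff powr_mult summable_mult)
  then have "summable (\<lambda>i. norm (c * x i) powr enn2real p)"
    by (rule summable_comparison_test[rotated]) (auto intro!: powr_mono2 norm_mult_ineq)
  then show ?thesis using False by (simp add: lp_space_finite_iff)
qed

lemma lp_space_add:
  fixes x y :: "nat \<Rightarrow> 'a::real_normed_vector"
  assumes "x \<in> lp_space p" "y \<in> lp_space p"
  shows "(\<lambda>i. x i + y i) \<in> lp_space p"
proof (cases "p = \<infinity>")
  case True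
  obtain B C where "\<forall>i. norm (x i) \<le> B" "\<forall>i. norm (y i) \<le> C"
    using assms True by (auto simp: lp_space_infinite_iff)
  then have "\<forall>i. norm (x i + y i) \<le> B + C" by (meson add_mono norm_triangle_le)
  then show ?thesis using True by (auto simp: lp_space_infinite_iff)
next
  case False
  define P where "P = enn2real p"
  have le: "norm (x i + y i) powr P \<le> 2 powr P * (norm (x i) powr P + norm (y i) powr P)" for i
  proof -
    have "norm (x i + y i) powr P \<le> (2 * max (norm (x i)) (norm (y i))) powr P"
      by (rule powr_mono2) (auto simp: P_def intro: order_trans[OF norm_triangle_ineq])
    also have "\<dots> = 2 powr P * max (norm (x i)) (norm (y i)) powr P"
      by (simp add: powr_mult)
    also have "\<dots> \<le> 2 powr P * (norm (x i) powr P + norm (y i) powr P)"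
      by (rule mult_left_mono) (auto simp: max_def)
    finally show ?thesis .
  qed
  have "summable (\<lambda>i. 2 powr P * (norm (x i) powr P + norm (y i) powr P))"
    using assms False by (auto simp: lp_space_finite_iff P_def intro!: summable_mult summable_add)
  then have "summable (\<lambda>i. norm (x i + y i) powr P)"
    by (rule summable_comparison_test[rotated]) (use le in auto)
  then show ?thesis using False by (simp add: lp_space_finite_iff P_def)
qed

lemma lp_space_diff:
  fixes x y :: "nat \<Rightarrow> 'a::real_normed_vector"
  assumes "x \<in> lp_space p" "y \<in> lp_space p"
  shows "(\<lambda>i. x i - y i) \<in> lp_space p"
  using lp_space_add[OF assms(1) lp_space_mono[OF assms(2), of "\<lambda>i. - y i"]] by simp

lemma lp_space_shift:
  fixes x :: "nat \<Rightarrow> 'a::real_normed_vector"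
  assumes "x \<in> lp_space p"
  shows "(\<lambda>i. if i = 0 then a else x (i - 1)) \<in> lp_space p"
proof (cases "p = \<infinity>")
  case True
  then obtain B where "\<forall>i. norm (x i) \<le> B" using assms by (auto simp: lp_space_infinite_iff)
  then have "\<forall>i. norm (if i = 0 then a else x (i - 1)) \<le> max B (norm a)"
    by (auto simp: le_max_iff_disj)
  then show ?thesis unfolding lp_space_infinite_iff[OF True] by blast
next
  case False
  then have "summable (\<lambda>i. norm (if Suc i = 0 then a else x (Suc i - 1)) powr enn2real p)"
    using assms by (simp add: lp_space_finite_iff)
  then have "summable (\<lambda>i. norm (if i = 0 then a else x (i - 1)) powr enn2real p)"
    by (subst summable_Suc_iff[symmetric])
  then show ?thesis using False by (simp add: lp_space_finite_iff)
qed

lemma lp_space_single: "(\<lambda>i. if i = j then a else 0) \<in> lp_space p"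
proof (cases "p = \<infinity>")
  case True
  have "\<forall>i. norm (if i = j then a else 0) \<le> norm a" by auto
  then show ?thesis using True by (auto simp: lp_space_infinite_iff)
next
  case False
  have "summable (\<lambda>i. if i = j then norm a powr enn2real p else 0)" by simp
  then have "summable (\<lambda>i. norm (if i = j then a else 0) powr enn2real p)"
    by (rule summable_cong[THEN iffD1, rotated]) auto
  then show ?thesis using False by (simp add: lp_space_finite_iff)
qed

definition e0 :: "nat \<Rightarrow> 'a::zero_neq_one" where
  "e0 i = (if i = 0 then 1 else 0)"

lemma e0_lp_space: "e0 \<in> lp_space p"
  unfolding e0_def by (rule lp_space_single)

lemma lp_space_zero: "(\<lambda>i. 0) \<in> lp_space p"
  using lp_space_single[of _ 0 p] by simp

lemma lp_norm_single_0:
  assumes "1 \<le> p"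
  shows "lp_norm p (\<lambda>i. if i = 0 then s else 0 :: real) = \<bar>s\<bar>"
proof (cases "p = \<infinity>")
  case True
  have "(SUP i. norm (if i = 0 then s else 0 :: real)) = \<bar>s\<bar>"
    by (rule cSup_eq_maximum) (auto simp: image_iff intro: exI[of _ 0])
  then show ?thesis using True by (simp add: lp_norm_def)
next
  case False
  define P where "P = enn2real p"
  have P: "P \<ge> 1" using False assms by (cases p) (auto simp: P_def simp flip: ennreal_1)
  have e: "(\<lambda>i. norm (if i = 0 then s else 0 :: real) powr P) =
      (\<lambda>i. if i = 0 then \<bar>s\<bar> powr P else 0)"
    by auto
  have "(\<Sum>i. norm (if i = 0 then s else 0 :: real) powr P) = \<bar>s\<bar> powr P"
    unfolding e by (rule sums_unique[OF sums_single, symmetric])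
  then show ?thesis using False P by (simp add: lp_norm_def P_def[symmetric] powr_powr)
qed

lemma Holder_inequality_finite:
  fixes a b :: "'i \<Rightarrow> real"
  assumes S: "finite S" and a: "\<And>i. a i \<ge> 0" and b: "\<And>i. b i \<ge> 0"
    and PQ: "P > 1" "Q > 1" "1/P + 1/Q = 1"
  shows "(\<Sum>i\<in>S. a i * b i) \<le> (\<Sum>i\<in>S. a i powr P) powr (1/P) * (\<Sum>i\<in>S. b i powr Q) powr (1/Q)"
proof -
  define A where "A = (\<Sum>i\<in>S. a i powr P)"
  define B where "B = (\<Sum>i\<in>S. b i powr Q)"
  show ?thesis
  proof (cases "A = 0 \<or> B = 0")
    case True
    then have "\<forall>i\<in>S. a i = 0 \<or> b i = 0"
      using S by (auto simp: A_def B_def sum_nonneg_eq_0_iff)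
    then show ?thesis by (simp add: sum.neutral)
  next
    case False
    then have Ap: "A > 0" and Bp: "B > 0"
      by (auto simp: A_def B_def order_less_le sum_nonneg)
    define \<alpha> where "\<alpha> = A powr (1/P)"
    define \<beta> where "\<beta> = B powr (1/Q)"
    have \<alpha>\<beta>: "\<alpha> > 0" "\<beta> > 0" "\<alpha> powr P = A" "\<beta> powr Q = B"
      using Ap Bp PQ by (auto simp: \<alpha>_def \<beta>_def powr_powr)
    have Young: "(a i / \<alpha>) * (b i / \<beta>) \<le> a i powr P / (A * P) + b i powr Q / (B * Q)" for i
    proof -
      have "(a i / \<alpha>) * (b i / \<beta>) \<le> (a i / \<alpha>) powr P / P + (b i / \<beta>) powr Q / Q"
        using \<alpha>\<beta> a b PQ by (intro Youngs_inequality) auto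
      also have "\<dots> = a i powr P / (A * P) + b i powr Q / (B * Q)"
        using \<alpha>\<beta> a b by (simp add: powr_divide)
      finally show ?thesis .
    qed
    have "(\<Sum>i\<in>S. a i * b i) / (\<alpha> * \<beta>) = (\<Sum>i\<in>S. (a i / \<alpha>) * (b i / \<beta>))"
      by (simp add: sum_divide_distrib)
    also have "\<dots> \<le> (\<Sum>i\<in>S. a i powr P / (A * P) + b i powr Q / (B * Q))"
      by (intro sum_mono Young)
    also have "\<dots> = A / (A * P) + B / (B * Q)"
      by (simp add: sum.distrib A_def B_def sum_divide_distrib)
    also have "\<dots> = 1" using Ap Bp PQ by simp
    finally show ?thesis using \<alpha>\<beta> by (simp add: divide_le_eq \<alpha>_def \<beta>_def A_def B_def)
  qed
qed

lemma Holder_inequality_suminf: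
  fixes a b :: "nat \<Rightarrow> real"
  assumes a: "\<And>i. a i \<ge> 0" and b: "\<And>i. b i \<ge> 0"
    and PQ: "P > 1" "Q > 1" "1/P + 1/Q = 1"
    and sa: "summable (\<lambda>i. a i powr P)" and sb: "summable (\<lambda>i. b i powr Q)"
  shows "summable (\<lambda>i. a i * b i)"
    and "(\<Sum>i. a i * b i) \<le> (\<Sum>i. a i powr P) powr (1/P) * (\<Sum>i. b i powr Q) powr (1/Q)"
proof -
  have Young: "a i * b i \<le> a i powr P / P + b i powr Q / Q" for i
    using a b PQ by (intro Youngs_inequality) auto
  have "summable (\<lambda>i. a i powr P / P + b i powr Q / Q)"
    using sa sb by (intro summable_add summable_divide)
  then show s: "summable (\<lambda>i. a i * b i)"
    by (rule summable_comparison_test[rotated]) (use a b Young in auto)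
  show "(\<Sum>i. a i * b i) \<le> (\<Sum>i. a i powr P) powr (1/P) * (\<Sum>i. b i powr Q) powr (1/Q)"
  proof (rule suminf_le_const[OF s])
    fix n
    have "(\<Sum>i<n. a i * b i) \<le> (\<Sum>i<n. a i powr P) powr (1/P) * (\<Sum>i<n. b i powr Q) powr (1/Q)"
      by (rule Holder_inequality_finite) (use a b PQ in auto)
    also have "\<dots> \<le> (\<Sum>i. a i powr P) powr (1/P) * (\<Sum>i. b i powr Q) powr (1/Q)"
      using PQ by (intro mult_mono powr_mono2 sum_le_suminf sa sb)
        (auto intro!: sum_nonneg suminf_nonneg sa sb)
    finally show "(\<Sum>i<n. a i * b i) \<le> (\<Sum>i. a i powr P) powr (1/P) * (\<Sum>i. b i powr Q) powr (1/Q)" .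
  qed
qed

lemma norm_le_lp_norm_infinite:
  assumes "p = \<infinity>" "x \<in> lp_space p"
  shows "norm (x i) \<le> lp_norm p x"
proof -
  obtain B where "\<And>i. norm (x i) \<le> B" using assms lp_space_infinite_iff by blast
  then show ?thesis
    unfolding lp_norm_def using assms(1) by (auto intro!: cSUP_upper bdd_aboveI[where M=B])
qed

lemma lp_norm_1: "x \<in> lp_space 1 \<Longrightarrow> lp_norm 1 x = (\<Sum>i. norm (x i))"
  by (simp add: lp_space_def lp_norm_def suminf_nonneg)

lemma Holder_inequality_bounded:
  fixes a b :: "nat \<Rightarrow> real"
  assumes a: "summable a" "\<And>i. 0 \<le> a i" and b: "\<And>i. 0 \<le> b i" "\<And>i. b i \<le> B"
  shows "summable (\<lambda>i. a i * b i)" and "(\<Sum>i. a i * b i) \<le> (\<Sum>i. a i) * B"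
proof -
  have le: "a i * b i \<le> a i * B" for i using a b by (intro mult_left_mono) auto
  show s: "summable (\<lambda>i. a i * b i)"
    by (rule summable_comparison_test[OF _ summable_mult2[OF a(1)]]) (use le a b in auto)
  show "(\<Sum>i. a i * b i) \<le> (\<Sum>i. a i) * B"
    using suminf_le[OF le s summable_mult2[OF a(1)]] suminf_mult2[OF a(1)] by simp
qed

lemma lp_Holder_inequality:
  fixes f :: "nat \<Rightarrow> real" and x :: "nat \<Rightarrow> 'a::real_normed_vector"
  assumes "1 \<le> p" "1/p + 1/q = 1" "f \<in> lp_space q" "x \<in> lp_space p"
  shows "summable (\<lambda>k. \<bar>f k\<bar> * norm (x k))"
    and "(\<Sum>k. \<bar>f k\<bar> * norm (x k)) \<le> lp_norm q f * lp_norm p x"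
proof -
  have "summable (\<lambda>k. \<bar>f k\<bar> * norm (x k)) \<and> (\<Sum>k. \<bar>f k\<bar> * norm (x k)) \<le> lp_norm q f * lp_norm p x"
    using conjugate_exponent_cases[OF assms(1,2)]
  proof (elim disjE exE conjE)
    assume p: "p = \<infinity>" and q: "q = 1"
    have "summable (\<lambda>i. \<bar>f i\<bar>)" using assms(3) q by (simp add: lp_space_def)
    then show ?thesis
      using Holder_inequality_bounded[of "\<lambda>i. \<bar>f i\<bar>" "\<lambda>i. norm (x i)" "lp_norm p x"]
        norm_le_lp_norm_infinite[OF p assms(4)] lp_norm_1[of f] assms(3) q by simp
  next
    assume p: "p = 1" and q: "q = \<infinity>"
    have "summable (\<lambda>i. norm (x i))" using assms(4) p by (simp add: lp_space_def)
    then show ?thesis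
      using Holder_inequality_bounded[of "\<lambda>i. norm (x i)" "\<lambda>i. \<bar>f i\<bar>" "lp_norm q f"]
        norm_le_lp_norm_infinite[OF q assms(3)] lp_norm_1[of x] assms(4) p
      by (simp add: mult.commute)
  next
    fix P Q assume p: "p = ennreal P" and q: "q = ennreal Q"
      and PQ: "1 < P" "1 < Q" "1/P + 1/Q = 1"
    have ep: "enn2real p = P" "p \<noteq> \<infinity>" and eq: "enn2real q = Q" "q \<noteq> \<infinity>"
      using p q PQ by auto
    have sx: "summable (\<lambda>i. norm (x i) powr P)" using assms(4) ep by (simp add: lp_space_def)
    have sf: "summable (\<lambda>i. \<bar>f i\<bar> powr Q)" using assms(3) eq by (simp add: lp_space_def)
    have "1/Q + 1/P = 1" using PQ by simp
    then show ?thesis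
      using Holder_inequality_suminf[of "\<lambda>i. \<bar>f i\<bar>" "\<lambda>i. norm (x i)" Q P, OF _ _ PQ(2,1) _ sf sx]
        ep eq by (simp add: lp_norm_def)
  qed
  then show "summable (\<lambda>k. \<bar>f k\<bar> * norm (x k))"
    and "(\<Sum>k. \<bar>f k\<bar> * norm (x k)) \<le> lp_norm q f * lp_norm p x" by auto
qed

lemma lp_summable_mult:
  fixes f :: "nat \<Rightarrow> real" and x :: "nat \<Rightarrow> 'a::{real_normed_div_algebra,banach}"
  assumes "1 \<le> p" "1/p + 1/q = 1" "f \<in> lp_space q" "x \<in> lp_space p"
  shows "summable (\<lambda>k. of_real (f k) * x k)"
proof (rule summable_norm_cancel)
  show "summable (\<lambda>k. norm (of_real (f k) * x k))"
    using lp_Holder_inequality(1)[OF assms] by (simp add: norm_mult)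
qed

lemma powr_weighted_sum_le:
  fixes \<alpha> y :: "'i \<Rightarrow> real"
  assumes A: "finite A" and \<alpha>: "\<And>k. \<alpha> k \<ge> 0" and y: "\<And>k. y k \<ge> 0" and P: "P \<ge> 1"
  shows "(\<Sum>k\<in>A. \<alpha> k * y k) powr P \<le> (\<Sum>k\<in>A. \<alpha> k) powr (P - 1) * (\<Sum>k\<in>A. \<alpha> k * y k powr P)"
proof (cases "P = 1")
  case True
  show ?thesis
  proof (cases "(\<Sum>k\<in>A. \<alpha> k) = 0")
    case True
    then have "\<forall>k\<in>A. \<alpha> k = 0" using A \<alpha> by (simp add: sum_nonneg_eq_0_iff)
    then show ?thesis by simp
  qed (use True \<alpha> y in \<open>auto intro: sum_nonneg\<close>)
next
  case False
  then have P1: "P > 1" using P by simp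
  define Q where "Q = P / (P - 1)"
  have Q1: "Q > 1" and PQ: "1/Q + 1/P = 1" and PQ': "P / Q = P - 1"
    using P1 by (auto simp: Q_def field_simps)
  have split: "\<alpha> k * y k = \<alpha> k powr (1/Q) * (\<alpha> k powr (1/P) * y k)" for k
    using \<alpha>[of k] PQ by (cases "\<alpha> k = 0") (auto simp flip: powr_add)
  have "(\<Sum>k\<in>A. \<alpha> k * y k) \<le>
      (\<Sum>k\<in>A. (\<alpha> k powr (1/Q)) powr Q) powr (1/Q) *
      (\<Sum>k\<in>A. (\<alpha> k powr (1/P) * y k) powr P) powr (1/P)"
    unfolding split
    by (rule Holder_inequality_finite) (use A Q1 P1 PQ y in \<open>auto simp: add.commute\<close>)
  also have "\<dots> = (\<Sum>k\<in>A. \<alpha> k) powr (1/Q) * (\<Sum>k\<in>A. \<alpha> k * y k powr P) powr (1/P)"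
    using \<alpha> y Q1 P1 by (simp add: powr_powr powr_mult)
  finally have Holder: "(\<Sum>k\<in>A. \<alpha> k * y k) \<le> \<dots>" .
  have "(\<Sum>k\<in>A. \<alpha> k * y k) powr P \<le>
      ((\<Sum>k\<in>A. \<alpha> k) powr (1/Q) * (\<Sum>k\<in>A. \<alpha> k * y k powr P) powr (1/P)) powr P"
    using Holder \<alpha> y P1 by (intro powr_mono2) (auto intro: sum_nonneg)
  also have "\<dots> = (\<Sum>k\<in>A. \<alpha> k) powr (P - 1) * (\<Sum>k\<in>A. \<alpha> k * y k powr P)"
    using \<alpha> y P1 PQ' by (simp add: powr_mult powr_powr sum_nonneg)
  finally show ?thesis .
qed

lemma sum_geometric_kernel_le:
  fixes s :: real
  assumes "0 \<le> s" "s < 1"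
  shows "(\<Sum>k\<le>i. s ^ (i - k)) \<le> 1 / (1 - s)"
proof -
  have "(\<Sum>k\<le>i. s ^ (i - k)) = (\<Sum>k\<le>i. s ^ k)"
    by (rule sum.reindex_bij_witness[of _ "\<lambda>k. i - k" "\<lambda>k. i - k"]) auto
  also have "\<dots> \<le> (\<Sum>k. s ^ k)"
    using assms by (intro sum_le_suminf summable_geometric) auto
  also have "\<dots> = 1 / (1 - s)"
    using assms by (simp add: suminf_geometric)
  finally show ?thesis .
qed

lemma powr_geometric_convolution_le:
  fixes y :: "nat \<Rightarrow> real"
  assumes y: "\<And>k. y k \<ge> 0" and s: "0 \<le> s" "s < 1" and P: "P \<ge> 1"
  shows "(\<Sum>k\<le>i. s ^ (i - k) * y k) powr P
    \<le> (1 / (1 - s)) powr (P - 1) * (\<Sum>k\<le>i. s ^ (i - k) * y k powr P)"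
proof -
  have "(\<Sum>k\<le>i. s ^ (i - k) * y k) powr P
      \<le> (\<Sum>k\<le>i. s ^ (i - k)) powr (P - 1) * (\<Sum>k\<le>i. s ^ (i - k) * y k powr P)"
    using y s P by (simp add: powr_weighted_sum_le)
  also have "\<dots> \<le> (1 / (1 - s)) powr (P - 1) * (\<Sum>k\<le>i. s ^ (i - k) * y k powr P)"
    using sum_geometric_kernel_le[OF s] s y P
    by (intro mult_right_mono powr_mono2) (auto intro: sum_nonneg)
  finally show ?thesis .
qed

lemma lp_space_geometric_convolution:
  fixes y :: "nat \<Rightarrow> real"
  assumes p: "1 \<le> p" and y: "y \<in> lp_space p" "\<And>i. y i \<ge> 0" and s: "0 \<le> s" "s < 1"
  shows "(\<lambda>i. \<Sum>k\<le>i. s ^ (i - k) * y k) \<in> lp_space p"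
proof (cases "p = \<infinity>")
  case True
  obtain B where B: "\<And>i. norm (y i) \<le> B" using y lp_space_infinite_iff[OF True] by blast
  have "norm (\<Sum>k\<le>i. s ^ (i - k) * y k) \<le> B * (1 / (1 - s))" for i
  proof -
    have "norm (\<Sum>k\<le>i. s ^ (i - k) * y k) \<le> (\<Sum>k\<le>i. s ^ (i - k) * B)"
      using B y s by (auto simp: abs_of_nonneg sum_nonneg intro!: sum_mono mult_left_mono)
    also have "\<dots> = B * (\<Sum>k\<le>i. s ^ (i - k))"
      by (simp add: sum_distrib_left mult.commute)
    also have "\<dots> \<le> B * (1 / (1 - s))"
      using sum_geometric_kernel_le[OF s] B[of 0] y(2)[of 0] by (intro mult_left_mono) auto
    finally show ?thesis .
  qed
  then show ?thesis unfolding lp_space_infinite_iff[OF True] by blast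
next
  case False
  define P where "P = enn2real p"
  have P: "P \<ge> 1" using False p by (cases p) (auto simp: P_def simp flip: ennreal_1)
  have "summable (\<lambda>k. norm (y k powr P))" "summable (\<lambda>k. norm (s ^ k))"
    using y False s by (simp_all add: lp_space_finite_iff P_def summable_geometric)
  from Cauchy_product_sums[OF this] have "summable (\<lambda>i. \<Sum>k\<le>i. y k powr P * s ^ (i - k))"
    by (simp add: sums_iff)
  then have "summable (\<lambda>i. (1 / (1 - s)) powr (P - 1) * (\<Sum>k\<le>i. s ^ (i - k) * y k powr P))"
    by (intro summable_mult) (simp add: mult.commute)
  then have "summable (\<lambda>i. norm (\<Sum>k\<le>i. s ^ (i - k) * y k) powr P)"
    by (rule summable_comparison_test[rotated])
      (use powr_geometric_convolution_le[OF y(2) s P] y s in \<open>auto simp: abs_of_nonneg sum_nonneg\<close>)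
  then show ?thesis using False by (simp add: lp_space_finite_iff P_def)
qed

locale weighted_shift =
  fixes p :: ennreal and t :: "nat \<Rightarrow> real" and c :: real and N :: nat
  assumes p_ge_1: "1 \<le> p"
    and t_nonneg: "\<And>i. 0 \<le> t i" and t_le_1: "\<And>i. t i \<le> 1"
    and c: "0 < c" "c < 1" and t_le_c: "\<And>j. N \<le> j \<Longrightarrow> t j \<le> c"
begin

definition shift_prod :: "nat \<Rightarrow> nat \<Rightarrow> real" where
  "shift_prod k i = (\<Prod>j\<in>{k..<i}. t j)"

lemma shift_prod_nonneg: "0 \<le> shift_prod k i"
  by (simp add: shift_prod_def prod_nonneg t_nonneg)

lemma shift_prod_Suc: "k \<le> i \<Longrightarrow> shift_prod k (Suc i) = shift_prod k i * t i"
  by (simp add: shift_prod_def prod.atLeastLessThan_Suc)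

lemma shift_prod_refl [simp]: "shift_prod k k = 1"
  by (simp add: shift_prod_def)

lemma shift_prod_0: "shift_prod 0 i = (\<Prod>j<i. t j)"
  by (simp add: shift_prod_def atLeast0LessThan)

lemma shift_prod_le: "k \<le> i \<Longrightarrow> shift_prod k i \<le> c ^ (i - k) / c ^ N"
proof -
  assume "k \<le> i"
  \<comment> \<open>each factor is at most \<open>c\<close>, except for at most \<open>N\<close> factors that are at most \<open>1\<close>\<close>
  then have main: "shift_prod k i * c ^ min i N \<le> c ^ (i - k) * c ^ min k N"
  proof (induction i rule: dec_induct)
    case (step i)
    have "shift_prod k (Suc i) * c ^ min (Suc i) N \<le> c * (shift_prod k i * c ^ min i N)"
    proof (cases "N \<le> i")
      case True
      then show ?thesis
        using step(1) t_le_c[OF True] c shift_prod_nonneg[of k i]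
        by (simp add: shift_prod_Suc mult_right_mono mult.commute mult.left_commute)
    next
      case False
      then show ?thesis
        using step(1) t_nonneg[of i] t_le_1[of i] c shift_prod_nonneg[of k i]
        by (simp add: shift_prod_Suc mult_left_le_one_le mult.commute mult.left_commute)
    qed
    also have "\<dots> \<le> c * (c ^ (i - k) * c ^ min k N)"
      using step.IH c by simp
    finally show ?case using step(1) by (simp add: Suc_diff_le)
  qed simp
  have "shift_prod k i * c ^ N \<le> shift_prod k i * c ^ min i N"
    using c shift_prod_nonneg by (intro mult_left_mono power_decreasing) auto
  also note main
  also have "c ^ (i - k) * c ^ min k N \<le> c ^ (i - k)"
    using c by (intro mult_left_le power_le_one) auto
  finally show ?thesis using c by (simp add: field_simps)
qed

text \<open>The solution u = (l - T)^-1 w of l u_0 = w_0, l u_(i+1) = w_(i+1) + t_i u_i.\<close>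
definition shift_resolvent :: "'a::real_normed_field \<Rightarrow> (nat \<Rightarrow> 'a) \<Rightarrow> nat \<Rightarrow> 'a" where
  "shift_resolvent l w i = (\<Sum>k\<le>i. of_real (shift_prod k i) * w k / l ^ Suc (i - k))"

lemma shift_resolvent_0: "shift_resolvent l w 0 = w 0 / l"
  by (simp add: shift_resolvent_def)

lemma shift_resolvent_Suc:
  assumes "l \<noteq> 0"
  shows "shift_resolvent l w (Suc i) = (w (Suc i) + of_real (t i) * shift_resolvent l w i) / l"
proof -
  have "(\<Sum>k\<le>i. of_real (shift_prod k (Suc i)) * w k / l ^ Suc (Suc i - k)) =
      (\<Sum>k\<le>i. of_real (t i) * (of_real (shift_prod k i) * w k / l ^ Suc (i - k)) / l)"
    by (intro sum.cong refl) (simp add: shift_prod_Suc Suc_diff_le field_simps)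
  then show ?thesis
    by (simp add: shift_resolvent_def sum_distrib_left sum_divide_distrib add_divide_distrib)
qed

lemma shift_resolvent_e0: "shift_resolvent l e0 i = of_real (shift_prod 0 i) / l ^ Suc i"
  by (simp add: shift_resolvent_def e0_def sum.atMost_shift if_distrib cong: if_cong)

lemma shift_resolvent_add:
  "shift_resolvent l (\<lambda>i. x i + y i) i = shift_resolvent l x i + shift_resolvent l y i"
  by (simp add: shift_resolvent_def distrib_left add_divide_distrib sum.distrib)

lemma shift_resolvent_mult: "shift_resolvent l (\<lambda>i. a * x i) i = a * shift_resolvent l x i"
  by (simp add: shift_resolvent_def sum_distrib_left mult.left_commute)

lemma shift_resolvent_Re:
  "shift_resolvent l (\<lambda>j. Re (z j)) i = Re (shift_resolvent (of_real l) z i)"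
  by (simp add: shift_resolvent_def flip: of_real_power)

lemma shift_resolvent_Im:
  "shift_resolvent l (\<lambda>j. Im (z j)) i = Im (shift_resolvent (of_real l) z i)"
  by (simp add: shift_resolvent_def flip: of_real_power)

lemma norm_shift_resolvent_le:
  assumes "c < norm l"
  shows "norm (shift_resolvent l w i)
    \<le> 1 / (c ^ N * norm l) * (\<Sum>k\<le>i. (c / norm l) ^ (i - k) * norm (w k))"
proof -
  have l: "norm l > 0" using assms c by linarith
  have "norm (shift_resolvent l w i)
      \<le> (\<Sum>k\<le>i. norm (of_real (shift_prod k i) * w k / l ^ Suc (i - k)))"
    unfolding shift_resolvent_def by (rule norm_sum)
  also have "\<dots> \<le> (\<Sum>k\<le>i. 1 / (c ^ N * norm l) * ((c / norm l) ^ (i - k) * norm (w k)))"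
  proof (rule sum_mono)
    fix k assume "k \<in> {..i}"
    then have "shift_prod k i * norm (w k) / (norm l ^ (i - k) * norm l)
        \<le> c ^ (i - k) / c ^ N * norm (w k) / (norm l ^ (i - k) * norm l)"
      using shift_prod_le[of k i] l by (intro divide_right_mono mult_right_mono) auto
    then show "norm (of_real (shift_prod k i) * w k / l ^ Suc (i - k))
        \<le> 1 / (c ^ N * norm l) * ((c / norm l) ^ (i - k) * norm (w k))"
      using shift_prod_nonneg[of k i] l c
      by (simp add: norm_mult norm_divide norm_power field_simps power_divide)
  qed
  also have "\<dots> = 1 / (c ^ N * norm l) * (\<Sum>k\<le>i. (c / norm l) ^ (i - k) * norm (w k))"
    by (simp add: sum_distrib_left)
  finally show ?thesis .
qed

lemma shift_resolvent_lp_space: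
  fixes l :: "'a::real_normed_field"
  assumes "c < norm l" "w \<in> lp_space p"
  shows "shift_resolvent l w \<in> lp_space p"
proof -
  have l: "norm l > 0" using assms c by linarith
  have "(\<lambda>i. \<Sum>k\<le>i. (c / norm l) ^ (i - k) * norm (w k)) \<in> lp_space p"
    using assms c l lp_space_norm_iff
    by (intro lp_space_geometric_convolution p_ge_1) auto
  then have "(\<lambda>i. 1 / (c ^ N * norm l) * (\<Sum>k\<le>i. (c / norm l) ^ (i - k) * norm (w k))) \<in> lp_space p"
    by (rule lp_space_mult)
  then show ?thesis
    by (rule lp_space_mono)
      (use norm_shift_resolvent_le[OF assms(1)] c l in \<open>auto simp: sum_nonneg abs_mult\<close>)
qed

end

lemma lp_spectrum_eq:
  assumes "\<And>z. z \<in> lp_space p \<Longrightarrow> complexify L z = M z"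
  shows "lp_spectrum p L = {l. \<not> bij_betw (\<lambda>z i. l * z i - M z i) (lp_space p) (lp_space p)}"
  unfolding lp_spectrum_def
  by (intro Collect_cong arg_cong[where f=Not] bij_betw_cong) (simp add: assms)

lemma spectral_radius_le:
  assumes "lp_spectrum p L \<noteq> {}" "\<And>l. l \<in> lp_spectrum p L \<Longrightarrow> cmod l \<le> B"
  shows "spectral_radius p L \<le> B"
  unfolding spectral_radius_def using assms by (intro cSup_least) auto

lemma norm_le_spectral_radius:
  assumes "l \<in> lp_spectrum p L" "\<And>l. l \<in> lp_spectrum p L \<Longrightarrow> cmod l \<le> B"
  shows "cmod l \<le> spectral_radius p L"
  unfolding spectral_radius_def using assms
  by (intro cSup_upper) (auto intro!: bdd_aboveI[where M=B])

lemma Complex_suminf_Re_Im: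
  assumes "summable (\<lambda>k. of_real (f k) * z k)"
  shows "Complex (\<Sum>k. f k * Re (z k)) (\<Sum>k. f k * Im (z k)) = (\<Sum>k. of_real (f k) * z k)"
  using sums_Re[OF summable_sums[OF assms]] sums_Im[OF summable_sums[OF assms]]
  by (simp add: sums_iff complex_eq_iff)

context
  fixes \<gamma> :: "(nat \<Rightarrow> complex) \<Rightarrow> complex" and p :: ennreal
  assumes \<gamma>_add: "\<And>z z'. z \<in> lp_space p \<Longrightarrow> z' \<in> lp_space p \<Longrightarrow> \<gamma> (\<lambda>i. z i + z' i) = \<gamma> z + \<gamma> z'"
    and \<gamma>_mult: "\<And>z b. z \<in> lp_space p \<Longrightarrow> \<gamma> (\<lambda>i. b * z i) = b * \<gamma> z"
begin

private lemma \<gamma>_diff: "z \<in> lp_space p \<Longrightarrow> z' \<in> lp_space p \<Longrightarrow> \<gamma> (\<lambda>i. z i - z' i) = \<gamma> z - \<gamma> z'"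
  using \<gamma>_add[of z "\<lambda>i. -1 * z' i"] \<gamma>_mult[of z' "-1"] lp_space_mult[of z' p "-1"] by simp

lemma inj_on_rank_one:
  assumes l: "l \<noteq> 0" "l \<noteq> \<gamma> e0"
  shows "inj_on (\<lambda>z i. l * z i - (if i = 0 then \<gamma> z else 0)) (lp_space p)"
proof (rule inj_onI)
  fix z z' assume z: "z \<in> lp_space p" and z': "z' \<in> lp_space p"
    and eq: "(\<lambda>i. l * z i - (if i = 0 then \<gamma> z else 0)) =
      (\<lambda>i. l * z' i - (if i = 0 then \<gamma> z' else 0))"
  define d where "d i = z i - z' i" for i
  have d: "d i = 0" if "i \<noteq> 0" for i
    using fun_cong[OF eq, of i] that l by (simp add: d_def)
  have "l * z 0 - \<gamma> z = l * z' 0 - \<gamma> z'"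
    using fun_cong[OF eq, of 0] by simp
  then have "l * d 0 = \<gamma> z - \<gamma> z'"
    by (simp add: d_def algebra_simps)
  also have "\<dots> = \<gamma> d"
    using \<gamma>_diff[OF z z'] by (simp add: d_def[abs_def])
  also have "d = (\<lambda>i. d 0 * e0 i)" using d by (auto simp: e0_def)
  finally have "l * d 0 = d 0 * \<gamma> e0" using \<gamma>_mult[OF e0_lp_space] by (simp add: e0_def)
  then have "d 0 = 0" using l(2) by simp
  then have "d i = 0" for i using d by (cases "i = 0") auto
  then show "z = z'" by (auto simp: d_def fun_eq_iff)
qed

lemma rank_one_surj:
  assumes l: "l \<noteq> 0" "l \<noteq> \<gamma> e0" and w: "w \<in> lp_space p"
  shows "w \<in> (\<lambda>z i. l * z i - (if i = 0 then \<gamma> z else 0)) ` lp_space p"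
proof -
  define \<beta> where "\<beta> = \<gamma> w / (l - \<gamma> e0)"
  define z where "z i = 1 / l * (w i + \<beta> * e0 i)" for i
  have we: "(\<lambda>i. \<beta> * e0 i) \<in> lp_space p" by (intro lp_space_mult e0_lp_space)
  have z: "z \<in> lp_space p" unfolding z_def[abs_def] by (intro lp_space_mult lp_space_add w we)
  have "\<gamma> z = 1 / l * \<gamma> (\<lambda>i. w i + \<beta> * e0 i)"
    unfolding z_def[abs_def] by (rule \<gamma>_mult[OF lp_space_add[OF w we]])
  also have "\<gamma> (\<lambda>i. w i + \<beta> * e0 i) = \<gamma> w + \<beta> * \<gamma> e0"
    using \<gamma>_add[OF w we] \<gamma>_mult[OF e0_lp_space] by simp
  also have "\<gamma> w + \<beta> * \<gamma> e0 = \<beta> * l"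
    using l by (simp add: \<beta>_def field_simps)
  finally have "\<gamma> z = \<beta>" using l by simp
  then have "w = (\<lambda>i. l * z i - (if i = 0 then \<gamma> z else 0))"
    using l by (auto simp: z_def e0_def fun_eq_iff field_simps)
  then show ?thesis using z by blast
qed

lemma rank_one_bij:
  assumes "l \<noteq> 0" "l \<noteq> \<gamma> e0"
  shows "bij_betw (\<lambda>z i. l * z i - (if i = 0 then \<gamma> z else 0)) (lp_space p) (lp_space p)"
  unfolding bij_betw_def
  using inj_on_rank_one[OF assms] rank_one_surj[OF assms]
  by (auto intro!: lp_space_diff lp_space_mult lp_space_single)

lemma rank_one_not_bij_0:
  "\<not> bij_betw (\<lambda>z i. 0 * z i - (if i = 0 then \<gamma> z else 0)) (lp_space p) (lp_space p)"
proof
  assume "bij_betw (\<lambda>z i. 0 * z i - (if i = 0 then \<gamma> z else 0)) (lp_space p) (lp_space p)"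
  then have "(\<lambda>i. if i = Suc 0 then 1 else 0) \<in> (\<lambda>z i. - (if i = 0 then \<gamma> z else 0)) ` lp_space p"
    using lp_space_single[of "Suc 0" "1::complex" p] by (simp add: bij_betw_def)
  then obtain z where "(\<lambda>i. if i = Suc 0 then 1 else 0) = (\<lambda>i. - (if i = 0 then \<gamma> z else 0 :: complex))"
    by blast
  from fun_cong[OF this, of "Suc 0"] show False by simp
qed

lemma rank_one_not_bij_eigenvalue:
  "\<not> bij_betw (\<lambda>z i. \<gamma> e0 * z i - (if i = 0 then \<gamma> z else 0)) (lp_space p) (lp_space p)"
proof
  let ?\<Psi> = "\<lambda>z i. \<gamma> e0 * z i - (if i = 0 then \<gamma> z else 0)"
  assume bij: "bij_betw ?\<Psi> (lp_space p) (lp_space p)"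
  have "\<gamma> (\<lambda>i. 0) = 0" using \<gamma>_mult[OF lp_space_zero, of 0] by simp
  then have "?\<Psi> e0 = ?\<Psi> (\<lambda>i. 0)" by (auto simp: e0_def)
  then have "e0 = (\<lambda>i. 0 :: complex)"
    by (rule inj_onD[OF bij_betw_imp_inj_on[OF bij] _ e0_lp_space lp_space_zero])
  then show False by (metis e0_def zero_neq_one)
qed

lemma rank_one_spectrum:
  "{l. \<not> bij_betw (\<lambda>z i. l * z i - (if i = 0 then \<gamma> z else 0)) (lp_space p) (lp_space p)} =
    {0, \<gamma> e0}"
  using rank_one_bij rank_one_not_bij_0 rank_one_not_bij_eigenvalue by blast

end

locale shift_rank_one = weighted_shift +
  fixes q :: ennreal and f :: "nat \<Rightarrow> real"
  assumes conjugate: "1/p + 1/q = 1" and f_lp: "f \<in> lp_space q" and f_nonneg: "\<And>i. 0 \<le> f i"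
begin

definition T_op :: "(nat \<Rightarrow> real) \<Rightarrow> nat \<Rightarrow> real" where
  "T_op x i = (if i = 0 then 0 else t (i - 1) * x (i - 1))"

definition F_op :: "(nat \<Rightarrow> real) \<Rightarrow> nat \<Rightarrow> real" where
  "F_op x i = (if i = 0 then (\<Sum>k. f k * x k) else 0)"

definition A_op :: "(nat \<Rightarrow> real) \<Rightarrow> nat \<Rightarrow> real" where
  "A_op x i = T_op x i + F_op x i"

definition A_cx :: "(nat \<Rightarrow> complex) \<Rightarrow> nat \<Rightarrow> complex" where
  "A_cx z i = (if i = 0 then (\<Sum>k. of_real (f k) * z k) else of_real (t (i - 1)) * z (i - 1))"

lemma summable_f_mult:
  fixes z :: "nat \<Rightarrow> 'a::{real_normed_div_algebra,banach}"
  shows "z \<in> lp_space p \<Longrightarrow> summable (\<lambda>k. of_real (f k) * z k)"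
  by (rule lp_summable_mult[OF p_ge_1 conjugate f_lp])

lemma summable_f_mult_real: "x \<in> lp_space p \<Longrightarrow> summable (\<lambda>k. f k * x k)"
  using summable_f_mult[of x] by simp

lemma F_op_lp_space: "F_op x \<in> lp_space p"
  unfolding F_op_def[abs_def] by (rule lp_space_single)

lemma bounded_lp_op_F_op: "bounded_lp_op p F_op"
  unfolding bounded_lp_op_def
proof (intro conjI ballI allI exI[of _ "lp_norm q f"])
  fix x y :: "nat \<Rightarrow> real" and a :: real assume x: "x \<in> lp_space p" and y: "y \<in> lp_space p"
  show "F_op x \<in> lp_space p" by (rule F_op_lp_space)
  show "F_op (\<lambda>i. x i + y i) = (\<lambda>i. F_op x i + F_op y i)"
    using suminf_add[OF summable_f_mult_real[OF x] summable_f_mult_real[OF y]]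
    by (auto simp: F_op_def algebra_simps)
  show "F_op (\<lambda>i. a * x i) = (\<lambda>i. a * F_op x i)"
    using suminf_mult[OF summable_f_mult_real[OF x], of a] by (auto simp: F_op_def algebra_simps)
  note Holder = lp_Holder_inequality[OF p_ge_1 conjugate f_lp x]
  have "lp_norm p (F_op x) = \<bar>\<Sum>k. f k * x k\<bar>"
    unfolding F_op_def[abs_def] by (rule lp_norm_single_0[OF p_ge_1])
  also have "\<dots> \<le> (\<Sum>k. \<bar>f k * x k\<bar>)"
    by (rule summable_rabs) (use Holder(1) in \<open>simp add: abs_mult\<close>)
  also have "\<dots> \<le> lp_norm q f * lp_norm p x"
    using Holder(2) by (simp add: abs_mult)
  finally show "lp_norm p (F_op x) \<le> lp_norm q f * lp_norm p x" .
qed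

lemma preserves_cone_F_op: "preserves_cone p F_op"
  unfolding preserves_cone_def lp_plus_def
proof (intro ballI, clarify)
  fix x :: "nat \<Rightarrow> real" assume x: "x \<in> lp_space p" and "\<forall>i. 0 \<le> x i"
  then have "0 \<le> (\<Sum>k. f k * x k)"
    by (intro suminf_nonneg summable_f_mult_real[OF x]) (simp add: f_nonneg)
  then show "F_op x \<in> lp_space p \<and> (\<forall>i. 0 \<le> F_op x i)"
    using F_op_lp_space by (auto simp: F_op_def)
qed

lemma complexify_A_op: "z \<in> lp_space p \<Longrightarrow> complexify A_op z = A_cx z"
  using Complex_suminf_Re_Im[OF summable_f_mult[of z]]
  by (auto simp: complexify_def A_op_def T_op_def F_op_def A_cx_def complex_eq_iff fun_eq_iff)

lemma lp_spectrum_A_op: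
  "lp_spectrum p A_op = {l. \<not> bij_betw (\<lambda>z i. l * z i - A_cx z i) (lp_space p) (lp_space p)}"
  by (rule lp_spectrum_eq) (rule complexify_A_op)

lemma A_cx_lp_space: "z \<in> lp_space p \<Longrightarrow> A_cx z \<in> lp_space p"
proof -
  assume z: "z \<in> lp_space p"
  have "(\<lambda>i. of_real (t i) * z i) \<in> lp_space p"
    by (rule lp_space_mono[OF z])
      (auto simp: norm_mult t_nonneg t_le_1 intro!: mult_left_le_one_le)
  then show ?thesis
    unfolding A_cx_def[abs_def] by (rule lp_space_shift)
qed

definition coef :: "nat \<Rightarrow> real" where
  "coef k = f k * (\<Prod>j<k. t j)"

definition char_series :: "complex \<Rightarrow> complex" where
  "char_series l = (\<Sum>k. of_real (coef k) / l ^ Suc k)"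

lemma coef_nonneg: "0 \<le> coef k"
  by (simp add: coef_def f_nonneg t_nonneg prod_nonneg)

lemma f_mult_resolvent_e0: "of_real (f k) * shift_resolvent l e0 k = of_real (coef k) / l ^ Suc k"
  by (simp add: e0_def shift_resolvent_e0 coef_def shift_prod_0)

lemma summable_char_series: "c < cmod l \<Longrightarrow> summable (\<lambda>k. of_real (coef k) / l ^ Suc k)"
  using summable_f_mult[OF shift_resolvent_lp_space[OF _ e0_lp_space]]
  by (simp add: f_mult_resolvent_e0)

lemma eigen_recursion_eq:
  fixes d :: "nat \<Rightarrow> complex"
  assumes l: "l \<noteq> 0" and rec: "\<And>j. l * d (Suc j) = of_real (t j) * d j"
  shows "d i = d 0 * of_real (shift_prod 0 i) / l ^ i"
proof (induction i)
  case (Suc i)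
  have "d (Suc i) = of_real (t i) * d i / l" using rec[of i] l by (simp add: field_simps)
  then show ?case using Suc l by (simp add: shift_prod_Suc field_simps)
qed simp

lemma f_mult_eigen_recursion:
  fixes d :: "nat \<Rightarrow> complex"
  assumes l: "l \<noteq> 0" and rec: "\<And>j. l * d (Suc j) = of_real (t j) * d j"
  shows "of_real (f k) * d k = d 0 * l * (of_real (coef k) / l ^ Suc k)"
  by (subst eigen_recursion_eq[OF assms]) (use l in \<open>simp add: coef_def shift_prod_0 field_simps\<close>)

lemma inj_on_A_cx_resolvent:
  assumes l: "c < cmod l" and \<phi>: "char_series l \<noteq> 1"
  shows "inj_on (\<lambda>z i. l * z i - A_cx z i) (lp_space p)"
proof (rule inj_onI)
  fix z z' assume z: "z \<in> lp_space p" and z': "z' \<in> lp_space p"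
    and eq: "(\<lambda>i. l * z i - A_cx z i) = (\<lambda>i. l * z' i - A_cx z' i)"
  have l0: "l \<noteq> 0" using l c by auto
  define d where "d i = z i - z' i" for i
  have eqi: "l * z i - A_cx z i = l * z' i - A_cx z' i" for i
    using fun_cong[OF eq] by simp
  have rec: "l * d (Suc j) = of_real (t j) * d j" for j
    using eqi[of "Suc j"] by (simp add: A_cx_def d_def algebra_simps)
  have "l * d 0 = (\<Sum>k. of_real (f k) * z k) - (\<Sum>k. of_real (f k) * z' k)"
    using eqi[of 0] by (simp add: A_cx_def d_def algebra_simps)
  also have "\<dots> = (\<Sum>k. of_real (f k) * d k)"
    using suminf_diff[OF summable_f_mult[OF z] summable_f_mult[OF z']]
    by (simp add: d_def algebra_simps)
  also have "\<dots> = d 0 * l * char_series l"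
    unfolding f_mult_eigen_recursion[OF l0 rec] char_series_def
    by (rule suminf_mult[OF summable_char_series[OF l]])
  finally have "d 0 * l * (1 - char_series l) = 0" by (simp add: algebra_simps)
  then have "d 0 = 0" using l0 \<phi> by simp
  then have "d i = 0" for i using eigen_recursion_eq[OF l0 rec, of i] by simp
  then show "z = z'" by (auto simp: d_def fun_eq_iff)
qed

text \<open>The preimage of w is u + beta v with u = (l - T)^-1 w, v = (l - T)^-1 e0, and beta chosen to
  fix the first coordinate.\<close>
lemma A_cx_resolvent_surj:
  assumes l: "c < cmod l" and \<phi>: "char_series l \<noteq> 1" and w: "w \<in> lp_space p"
  shows "\<exists>z\<in>lp_space p. (\<lambda>i. l * z i - A_cx z i) = w"
proof -
  have l0: "l \<noteq> 0" using l c by auto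
  define u where "u = shift_resolvent l w"
  define v where "v = shift_resolvent l (e0 :: nat \<Rightarrow> complex)"
  have u: "u \<in> lp_space p" and v: "v \<in> lp_space p"
    unfolding u_def v_def by (intro shift_resolvent_lp_space l w e0_lp_space)+
  define \<beta> where "\<beta> = (\<Sum>k. of_real (f k) * u k) / (1 - char_series l)"
  define z where "z i = u i + \<beta> * v i" for i
  have z: "z \<in> lp_space p" unfolding z_def[abs_def] by (intro lp_space_add lp_space_mult u v)
  have fv: "(\<Sum>k. of_real (f k) * v k) = char_series l"
    by (simp add: v_def f_mult_resolvent_e0 char_series_def)
  have "(\<Sum>k. of_real (f k) * z k) = (\<Sum>k. of_real (f k) * u k + \<beta> * (of_real (f k) * v k))"
    by (simp add: z_def algebra_simps)
  also have "\<dots> = (\<Sum>k. of_real (f k) * u k) + \<beta> * char_series l"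
    using suminf_add[OF summable_f_mult[OF u] summable_mult[OF summable_f_mult[OF v], of \<beta>]]
      suminf_mult[OF summable_f_mult[OF v], of \<beta>] fv by simp
  finally have fz: "(\<Sum>k. of_real (f k) * z k) = (\<Sum>k. of_real (f k) * u k) + \<beta> * char_series l" .
  have "l * z i - A_cx z i = w i" for i
  proof (cases i)
    case 0
    have "l * z 0 = w 0 + \<beta>"
      using l0 by (simp add: z_def u_def v_def shift_resolvent_0 e0_def field_simps)
    moreover have "A_cx z 0 = (\<Sum>k. of_real (f k) * u k) + \<beta> * char_series l"
      by (simp add: A_cx_def fz)
    ultimately have
      "l * z 0 - A_cx z 0 = w 0 + \<beta> * (1 - char_series l) - (\<Sum>k. of_real (f k) * u k)"
      by (simp add: algebra_simps)
    then show ?thesis using 0 \<phi> by (simp add: \<beta>_def)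
  next
    case (Suc j)
    have "l * u (Suc j) = w (Suc j) + of_real (t j) * u j" "l * v (Suc j) = of_real (t j) * v j"
      using l0 by (simp_all add: u_def v_def shift_resolvent_Suc e0_def)
    then show ?thesis using Suc by (simp add: A_cx_def z_def algebra_simps)
  qed
  then show ?thesis using z by blast
qed

lemma notin_spectrum_A:
  assumes "c < cmod l" "char_series l \<noteq> 1"
  shows "l \<notin> lp_spectrum p A_op"
proof -
  have "(\<lambda>z i. l * z i - A_cx z i) ` lp_space p = lp_space p"
    using A_cx_resolvent_surj[OF assms]
    by (auto intro!: lp_space_diff lp_space_mult A_cx_lp_space)
  then show ?thesis
    using inj_on_A_cx_resolvent[OF assms] by (simp add: lp_spectrum_A_op bij_betw_def)
qed

text \<open>Solving (l - A) z = e0 forces z to be geometric; this gives convergence of the series even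
  for |l| <= c.\<close>
lemma char_series_if_notin_spectrum_A:
  assumes l0: "l \<noteq> 0" and l: "l \<notin> lp_spectrum p A_op"
  shows "summable (\<lambda>k. of_real (coef k) / l ^ Suc k)" and "char_series l \<noteq> 1"
proof -
  have "e0 \<in> (\<lambda>z i. l * z i - A_cx z i) ` lp_space p"
    using l e0_lp_space by (simp add: lp_spectrum_A_op bij_betw_def)
  then obtain z where z: "z \<in> lp_space p" and eq: "e0 = (\<lambda>i. l * z i - A_cx z i)"
    by blast
  have eqi: "l * z i - A_cx z i = e0 i" for i using fun_cong[OF eq] by simp
  have rec: "l * z (Suc j) = of_real (t j) * z j" for j
    using eqi[of "Suc j"] by (simp add: A_cx_def e0_def)
  note fz = f_mult_eigen_recursion[OF l0 rec]
  have e: "l * z 0 - (\<Sum>k. of_real (f k) * z k) = 1"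
    using eqi[of 0] by (simp add: A_cx_def e0_def)
  have "z 0 \<noteq> 0"
  proof
    assume "z 0 = 0"
    then show False using e by (simp add: fz)
  qed
  moreover have "summable (\<lambda>k. (z 0 * l) * (of_real (coef k) / l ^ Suc k))"
    using summable_f_mult[OF z] unfolding fz .
  ultimately show s: "summable (\<lambda>k. of_real (coef k) / l ^ Suc k)"
    using l0 by (subst (asm) summable_cmult_iff) auto
  have "(\<Sum>k. of_real (f k) * z k) = z 0 * l * char_series l"
    unfolding fz char_series_def by (rule suminf_mult[OF s])
  then have "z 0 * l * (1 - char_series l) = l * z 0 - (\<Sum>k. of_real (f k) * z k)"
    by (simp add: algebra_simps)
  then have "z 0 * l * (1 - char_series l) = 1"
    using e by simp
  then show "char_series l \<noteq> 1" by auto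
qed

lemma zero_in_spectrum_A: "0 \<in> lp_spectrum p A_op"
proof (rule ccontr)
  assume "0 \<notin> lp_spectrum p A_op"
  then have "(\<lambda>z i. - A_cx z i) ` lp_space p = lp_space p"
    by (simp add: lp_spectrum_A_op bij_betw_def)
  then have surj: "w \<in> (\<lambda>z i. - A_cx z i) ` lp_space p" if "w \<in> lp_space p" for w
    using that by simp
  show False
  proof (cases "\<exists>j. t j = 0")
    case True
    then obtain j where j: "t j = 0" by auto
    obtain z where "(\<lambda>i. if i = Suc j then 1 else 0) = (\<lambda>i. - A_cx z i)"
      using surj[OF lp_space_single[of "Suc j" "1::complex" p]] by blast
    from fun_cong[OF this, of "Suc j"] show False using j by (simp add: A_cx_def)
  next
    case False
    obtain z where z: "e0 = (\<lambda>i. - A_cx z i)"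
      using surj[OF e0_lp_space] by blast
    have "z j = 0" for j
      using fun_cong[OF z, of "Suc j"] False by (simp add: A_cx_def e0_def)
    then show False using fun_cong[OF z, of 0] by (simp add: A_cx_def e0_def)
  qed
qed

definition gf :: "real \<Rightarrow> real" where
  "gf m = (\<Sum>k. coef k * m ^ k)"

definition R0 :: real where
  "R0 = (\<Sum>k. coef k)"

lemma summable_coef_powser_if_char_series:
  assumes "m > 0" "summable (\<lambda>k. of_real (coef k) / (of_real (1 / m) :: complex) ^ Suc k)"
  shows "summable (\<lambda>k. coef k * m ^ k)"
proof -
  have "summable (\<lambda>k. complex_of_real (m * (coef k * m ^ k)))"
    using assms(2) by (simp add: power_divide field_simps)
  then show ?thesis using assms(1) by (simp only: summable_complex_of_real summable_cmult_iff) simp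
qed

lemma summable_coef_powser:
  assumes "0 \<le> m" "m * c < 1"
  shows "summable (\<lambda>k. coef k * m ^ k)"
proof (cases "m = 0")
  case False
  then show ?thesis
    using assms by (intro summable_coef_powser_if_char_series summable_char_series)
      (auto simp: norm_divide field_simps)
qed simp

lemma summable_coef: "summable coef"
  using summable_coef_powser[of 1] c by simp

lemma gf_1: "gf 1 = R0"
  by (simp add: gf_def R0_def)

lemma R0_nonneg: "0 \<le> R0"
  unfolding R0_def by (intro suminf_nonneg summable_coef coef_nonneg)

lemma summable_coef_powser_mono:
  assumes "0 \<le> m" "m \<le> m'" "summable (\<lambda>k. coef k * m' ^ k)"
  shows "summable (\<lambda>k. coef k * m ^ k)"
  by (rule summable_comparison_test[OF _ assms(3)])
    (use assms coef_nonneg in \<open>auto intro!: mult_left_mono power_mono\<close>)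

lemma gf_mono:
  assumes "0 \<le> m" "m \<le> m'" "summable (\<lambda>k. coef k * m' ^ k)"
  shows "gf m \<le> gf m'"
  unfolding gf_def
  by (rule suminf_le[OF _ summable_coef_powser_mono[OF assms] assms(3)])
    (use assms coef_nonneg in \<open>auto intro!: mult_left_mono power_mono\<close>)

lemma gf_nonneg: "0 \<le> m \<Longrightarrow> summable (\<lambda>k. coef k * m ^ k) \<Longrightarrow> 0 \<le> gf m"
  unfolding gf_def by (intro suminf_nonneg) (simp_all add: coef_nonneg)

lemma isCont_gf:
  assumes "summable (\<lambda>k. coef k * K ^ k)" "\<bar>m\<bar> < K"
  shows "isCont gf m"
  unfolding gf_def[abs_def] by (rule isCont_powser[OF assms(1)]) (use assms in auto)

lemma char_series_of_real:
  assumes "m > 0" "summable (\<lambda>k. coef k * m ^ k)"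
  shows "char_series (of_real (1 / m)) = of_real (m * gf m)"
proof -
  have "of_real (m * gf m) = (\<Sum>k. complex_of_real (m * (coef k * m ^ k)))"
    unfolding gf_def suminf_mult[OF assms(2), symmetric]
    by (rule suminf_of_real[OF summable_mult[OF assms(2)]])
  also have "\<dots> = char_series (of_real (1 / m))"
    unfolding char_series_def using assms(1)
    by (intro suminf_cong) (simp add: field_simps power_divide)
  finally show ?thesis by simp
qed

lemma norm_char_series_le:
  assumes l: "c < cmod l"
  shows "cmod (char_series l) \<le> 1 / cmod l * gf (1 / cmod l)"
proof -
  have l0: "cmod l > 0" using l c by linarith
  have s: "summable (\<lambda>k. coef k * (1 / cmod l) ^ k)"
    by (rule summable_coef_powser) (use l0 l in \<open>auto simp: field_simps\<close>)
  have "cmod (char_series l) \<le> (\<Sum>k. 1 / cmod l * (coef k * (1 / cmod l) ^ k))"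
    unfolding char_series_def
    by (rule norm_suminf_le[OF _ summable_mult[OF s]])
      (simp add: norm_divide norm_mult norm_power power_divide coef_nonneg)
  also have "\<dots> = 1 / cmod l * gf (1 / cmod l)"
    unfolding gf_def by (rule suminf_mult[OF s])
  finally show ?thesis .
qed

lemma inverse_in_spectrum_A:
  assumes "m > 0" "summable (\<lambda>k. coef k * m ^ k)" "m * gf m = 1"
  shows "of_real (1 / m) \<in> lp_spectrum p A_op"
  using char_series_if_notin_spectrum_A(2)[of "of_real (1 / m)"] char_series_of_real[OF assms(1,2)]
    assms by auto

lemma norm_le_if_in_spectrum_A:
  assumes m: "0 < m" "m * c < 1" "m * gf m \<le> 1" and l: "l \<in> lp_spectrum p A_op"
  shows "cmod l \<le> 1 / m"
proof (rule ccontr)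
  assume "\<not> cmod l \<le> 1 / m"
  then have lm: "1 / m < cmod l" by simp
  have "c < 1 / m" using m by (simp add: field_simps)
  then have cl: "c < cmod l" using lm by linarith
  have l0: "0 < cmod l" using cl c by linarith
  have lt: "1 / cmod l < m" using lm m l0 by (simp add: field_simps)
  have s: "summable (\<lambda>k. coef k * m ^ k)" using m by (intro summable_coef_powser) auto
  have "1 / cmod l * gf (1 / cmod l) \<le> 1 / cmod l * gf m"
    using l0 lt s by (intro mult_left_mono gf_mono) auto
  also have "\<dots> < 1"
  proof (cases "gf m = 0")
    case False
    then have "1 / cmod l * gf m < m * gf m"
      using lt gf_nonneg[OF _ s] m by (intro mult_strict_right_mono) auto
    then show ?thesis using m by simp
  qed simp
  finally have "char_series l \<noteq> 1"
    using norm_char_series_le[OF cl] by auto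
  then show False using notin_spectrum_A[OF cl] l by simp
qed

lemma spectral_radius_A_eq:
  assumes "0 < m" "m * c < 1" "m * gf m = 1"
  shows "spectral_radius p A_op = 1 / m"
proof -
  have "of_real (1 / m) \<in> lp_spectrum p A_op"
    using assms by (intro inverse_in_spectrum_A summable_coef_powser) auto
  then have "cmod (of_real (1 / m)) \<le> spectral_radius p A_op"
    using norm_le_if_in_spectrum_A assms by (intro norm_le_spectral_radius[where B="1 / m"]) auto
  moreover have "spectral_radius p A_op \<le> 1 / m"
    using zero_in_spectrum_A norm_le_if_in_spectrum_A assms by (intro spectral_radius_le) auto
  ultimately show ?thesis using assms(1) by (simp add: norm_divide)
qed

text \<open>Lower semicontinuity up to the boundary of convergence: the partial sums are continuous and
  increase to m * gf m.\<close>
lemma exists_smaller_with_scaled_gf_gt: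
  assumes K: "summable (\<lambda>k. coef k * K ^ k)" and x: "0 \<le> x" "x < K" and y: "y < K * gf K"
  shows "\<exists>m. x < m \<and> m < K \<and> y < m * gf m"
proof -
  have "(\<lambda>n. K * (\<Sum>k<n. coef k * K ^ k)) \<longlonglongrightarrow> K * gf K"
    unfolding gf_def using K by (intro tendsto_mult_left summable_LIMSEQ)
  from order_tendstoD(1)[OF this y] obtain n where n: "y < K * (\<Sum>k<n. coef k * K ^ k)"
    by (auto simp: eventually_sequentially)
  define h where "h m = m * (\<Sum>k<n. coef k * m ^ k)" for m
  have "isCont h K" unfolding h_def by (intro continuous_intros)
  then have "(h \<longlongrightarrow> h K) (at_left K)" by (simp add: isCont_def filterlim_at_split)
  moreover have "y < h K" using n by (simp add: h_def)
  ultimately have "eventually (\<lambda>m. y < h m) (at_left K)" by (rule order_tendstoD(1))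
  moreover have "eventually (\<lambda>m. x < m \<and> m < K) (at_left K)"
    using eventually_at_left_real[OF x(2)] by simp
  ultimately obtain m where m: "y < h m" "x < m" "m < K"
    using eventually_happens'[OF trivial_limit_at_left_real eventually_conj] by blast
  have "h m \<le> m * gf m"
    unfolding h_def gf_def using m x coef_nonneg
    by (intro mult_left_mono sum_le_suminf summable_coef_powser_mono[OF _ _ K]) auto
  then show ?thesis using m by force
qed

text \<open>Otherwise R0 would be a regular value, so m * gf m would converge at 1/R0 with a value
  >= 1, and the intermediate value theorem would yield a spectral value 1/m > R0.\<close>
lemma exists_spectrum_A_ge_R0:
  assumes R0: "R0 < 1"
  shows "\<exists>l\<in>lp_spectrum p A_op. R0 \<le> cmod l"
proof (rule ccontr)
  assume small: "\<not> ?thesis"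
  have "R0 \<noteq> 0" using small zero_in_spectrum_A by fastforce
  then have R0_pos: "0 < R0" using R0_nonneg by simp
  define K where "K = 1 / R0"
  have K: "1 < K" "R0 = 1 / K" using R0 R0_pos by (auto simp: K_def)
  have "cmod (of_real (1 / K)) = R0" using K by (simp add: norm_divide)
  then have "of_real (1 / K) \<notin> lp_spectrum p A_op" using small by force
  note notin = char_series_if_notin_spectrum_A[OF _ this]
  have sK: "summable (\<lambda>k. coef k * K ^ k)"
    using notin(1) K by (intro summable_coef_powser_if_char_series) auto
  have "of_real (K * gf K) \<noteq> (1 :: complex)"
    using notin(2) char_series_of_real[OF _ sK] K by auto
  then have "K * gf K \<noteq> 1" by (metis of_real_1)
  moreover have "1 \<le> K * gf K"
    using gf_mono[of 1 K] sK K gf_1 by (simp add: field_simps)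
  ultimately obtain m1 where m1: "1 < m1" "m1 < K" "1 < m1 * gf m1"
    using exists_smaller_with_scaled_gf_gt[OF sK, of 1 1] K by force
  have "continuous_on {1..m1} (\<lambda>m. m * gf m)"
    using m1
    by (intro continuous_at_imp_continuous_on ballI continuous_intros isCont_gf[OF sK]) auto
  then obtain \<mu> where \<mu>: "1 \<le> \<mu>" "\<mu> \<le> m1" "\<mu> * gf \<mu> = 1"
    using IVT'[of "\<lambda>m. m * gf m" 1 1 m1] m1 R0 gf_1 by auto
  have "\<mu> * R0 < K * R0" using \<mu> m1 R0_pos by (intro mult_strict_right_mono) auto
  moreover have "K * R0 = 1" using R0_pos by (simp add: K_def)
  ultimately have "\<mu> * R0 < 1" by linarith
  then have "R0 < 1 / \<mu>" using \<mu> by (simp add: field_simps)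
  moreover have "of_real (1 / \<mu>) \<in> lp_spectrum p A_op"
    using \<mu> m1 by (intro inverse_in_spectrum_A summable_coef_powser_mono[OF _ _ sK]) auto
  moreover have "cmod (of_real (1 / \<mu>)) = 1 / \<mu>" using \<mu> by (simp add: norm_divide)
  ultimately show False using small by force
qed

lemma coef_powser_converges_beyond_1:
  obtains K where "1 < K" "K * c < 1" "summable (\<lambda>k. coef k * K ^ k)"
proof
  show "1 < (1 + 1 / c) / 2" "(1 + 1 / c) / 2 * c < 1" using c by (auto simp: field_simps)
  then show "summable (\<lambda>k. coef k * ((1 + 1 / c) / 2) ^ k)" by (intro summable_coef_powser) auto
qed

lemma spectral_radius_A_if_R0_ge_1:
  assumes R0: "1 \<le> R0"
  shows "1 \<le> spectral_radius p A_op \<and> spectral_radius p A_op \<le> R0 \<and>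
    (spectral_radius p A_op = 1 \<longleftrightarrow> R0 = 1)"
proof -
  obtain K where K: "1 < K" "K * c < 1" and sK: "summable (\<lambda>k. coef k * K ^ k)"
    by (rule coef_powser_converges_beyond_1)
  have "continuous_on {0..1} (\<lambda>m. m * gf m)"
    using K
    by (intro continuous_at_imp_continuous_on ballI continuous_intros isCont_gf[OF sK]) auto
  then obtain m where m: "0 \<le> m" "m \<le> 1" "m * gf m = 1"
    using IVT'[of "\<lambda>m. m * gf m" 0 1 1] R0 gf_1 by auto
  then have m0: "0 < m" by (cases "m = 0") auto
  have "m * c < 1" using m c by (smt (verit) mult_left_le_one_le)
  then have r: "spectral_radius p A_op = 1 / m"
    using m m0 by (intro spectral_radius_A_eq)
  have "m * gf m \<le> m * gf 1"
    using m m0 gf_mono[of m 1] summable_coef by (intro mult_left_mono) auto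
  then have "1 \<le> m * R0" using m gf_1 by simp
  then have "1 / m \<le> R0" using m0 by (simp add: field_simps)
  moreover have "1 / m = 1 \<longleftrightarrow> R0 = 1"
    using m m0 \<open>1 / m \<le> R0\<close> gf_1 by (auto simp: field_simps)
  ultimately show ?thesis using r m m0 by simp
qed

lemma spectral_radius_A_if_R0_lt_1:
  assumes R0: "R0 < 1"
  shows "R0 \<le> spectral_radius p A_op \<and> spectral_radius p A_op < 1"
proof -
  obtain K where K: "1 < K" "K * c < 1" and sK: "summable (\<lambda>k. coef k * K ^ k)"
    by (rule coef_powser_converges_beyond_1)
  have "isCont (\<lambda>m. m * gf m) 1"
    using K by (intro continuous_intros isCont_gf[OF sK]) auto
  then have "((\<lambda>m. m * gf m) \<longlongrightarrow> R0) (at_right 1)"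
    by (simp add: isCont_def filterlim_at_split gf_1)
  from order_tendstoD(2)[OF this R0]
  have "eventually (\<lambda>m. m * gf m < 1 \<and> 1 < m \<and> m < K) (at_right 1)"
    using eventually_at_right_real[OF K(1)] by eventually_elim auto
  then obtain m where m: "m * gf m < 1" "1 < m" "m < K"
    using eventually_happens'[OF trivial_limit_at_right_real] by blast
  have "m * c < 1" using m K c by (smt (verit) mult_strict_right_mono)
  then have bound: "cmod l \<le> 1 / m" if "l \<in> lp_spectrum p A_op" for l
    using m that by (intro norm_le_if_in_spectrum_A) auto
  obtain l where l: "l \<in> lp_spectrum p A_op" "R0 \<le> cmod l"
    using exists_spectrum_A_ge_R0[OF R0] by blast
  have "R0 \<le> spectral_radius p A_op"
    using l norm_le_spectral_radius[OF l(1) bound] by linarith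
  moreover have "spectral_radius p A_op \<le> 1 / m"
    using zero_in_spectrum_A bound by (intro spectral_radius_le) auto
  moreover have "1 / m < 1" using m by simp
  ultimately show ?thesis by linarith
qed

lemma spectral_radius_A_trichotomy:
  "(spectral_radius p A_op \<le> R0 \<and> 1 < spectral_radius p A_op) \<or>
   (R0 = 1 \<and> spectral_radius p A_op = 1) \<or>
   (R0 \<le> spectral_radius p A_op \<and> spectral_radius p A_op < 1)"
  using spectral_radius_A_if_R0_ge_1 spectral_radius_A_if_R0_lt_1 by (cases "1 \<le> R0") force+

definition G_op :: "(nat \<Rightarrow> real) \<Rightarrow> nat \<Rightarrow> real" where
  "G_op = F_op \<circ> the_inv_into (lp_space p) (\<lambda>x i. x i - T_op x i)"

definition G_functional :: "(nat \<Rightarrow> complex) \<Rightarrow> complex" where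
  "G_functional z = (\<Sum>k. of_real (f k) * shift_resolvent 1 z k)"

lemma the_inv_into_I_minus_T:
  assumes "y \<in> lp_space p"
  shows "the_inv_into (lp_space p) (\<lambda>x i. x i - T_op x i) y = shift_resolvent 1 y"
proof (rule the_inv_into_f_eq)
  show "inj_on (\<lambda>x i. x i - T_op x i) (lp_space p)"
  proof (rule inj_onI)
    fix x y :: "nat \<Rightarrow> real" assume eq: "(\<lambda>i. x i - T_op x i) = (\<lambda>i. y i - T_op y i)"
    have "x i = y i" for i
    proof (induction i)
      case 0
      then show ?case using fun_cong[OF eq, of 0] by (simp add: T_op_def)
    next
      case (Suc i)
      then show ?case using fun_cong[OF eq, of "Suc i"] by (simp add: T_op_def)
    qed
    then show "x = y" by auto
  qed
  show "(\<lambda>i. shift_resolvent 1 y i - T_op (shift_resolvent 1 y) i) = y"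
  proof
    show "shift_resolvent 1 y i - T_op (shift_resolvent 1 y) i = y i" for i
      by (cases i) (simp_all add: T_op_def shift_resolvent_0 shift_resolvent_Suc)
  qed
  show "shift_resolvent 1 y \<in> lp_space p"
    using assms c by (intro shift_resolvent_lp_space) auto
qed

lemma summable_G_functional:
  fixes z :: "nat \<Rightarrow> complex"
  assumes "z \<in> lp_space p"
  shows "summable (\<lambda>k. of_real (f k) * shift_resolvent 1 z k)"
  using assms c by (intro summable_f_mult shift_resolvent_lp_space) auto

lemma complexify_G_op:
  "z \<in> lp_space p \<Longrightarrow> complexify G_op z = (\<lambda>i. if i = 0 then G_functional z else 0)"
  using Complex_suminf_Re_Im[OF summable_G_functional]
  by (auto simp: complexify_def G_op_def F_op_def G_functional_def the_inv_into_I_minus_T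
      lp_space_Re lp_space_Im
      shift_resolvent_Re shift_resolvent_Im complex_eq_iff fun_eq_iff simp del: One_nat_def)

lemma G_functional_add:
  "z \<in> lp_space p \<Longrightarrow> z' \<in> lp_space p \<Longrightarrow>
    G_functional (\<lambda>i. z i + z' i) = G_functional z + G_functional z'"
  unfolding G_functional_def shift_resolvent_add
  by (subst suminf_add[OF summable_G_functional summable_G_functional]) (auto simp: algebra_simps)

lemma G_functional_mult: "z \<in> lp_space p \<Longrightarrow> G_functional (\<lambda>i. b * z i) = b * G_functional z"
  unfolding G_functional_def shift_resolvent_mult
  by (subst suminf_mult[OF summable_G_functional, symmetric]) (auto simp: algebra_simps)

lemma G_functional_e0: "G_functional e0 = of_real R0"
  using char_series_of_real[of 1] summable_coef
  by (simp add: G_functional_def f_mult_resolvent_e0 char_series_def gf_1)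

lemma spectral_radius_G_op: "spectral_radius p G_op = R0"
proof -
  have "lp_spectrum p G_op = {0, of_real R0}"
    using rank_one_spectrum[of p G_functional] G_functional_add G_functional_mult G_functional_e0
      complexify_G_op
    by (simp add: lp_spectrum_eq)
  then have "cmod ` lp_spectrum p G_op = {0, R0}" using R0_nonneg by simp
  then show ?thesis
    unfolding spectral_radius_def using R0_nonneg by (simp only:) (rule cSup_eq_maximum, auto)
qed

end

lemma limsup_less_1_imp_eventually_le:
  assumes "limsup (\<lambda>i. ereal (t i)) < 1"
  obtains c N where "0 < c" "c < 1" "\<And>j. N \<le> j \<Longrightarrow> t j \<le> c"
proof -
  obtain c0 where c0: "limsup (\<lambda>i. ereal (t i)) < ereal c0" "c0 < 1"
    using ereal_dense2[OF assms] by auto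
  define c where "c = max c0 (1 / 2)"
  have "limsup (\<lambda>i. ereal (t i)) < ereal c"
    using c0(1) by (rule less_le_trans) (simp add: c_def)
  then have "eventually (\<lambda>i. ereal (t i) < ereal c) sequentially" by (rule Limsup_lessD)
  then obtain N where "\<forall>j\<ge>N. t j < c" by (auto simp: eventually_sequentially)
  moreover have "0 < c" "c < 1" using c0 by (auto simp: c_def)
  ultimately show ?thesis using that by (meson less_imp_le)
qed

theorem mainTheorem8:
  fixes p q :: ennreal and f t :: "nat \<Rightarrow> real"
    and F T A :: "(nat \<Rightarrow> real) \<Rightarrow> (nat \<Rightarrow> real)"
  assumes hp: "1 \<le> p"
    and hq: "1 / p + 1 / q = 1"
    and hf: "f \<in> lp_space q"
    and hfpos: "\<forall>i. 0 \<le> f i"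
    and ht: "\<forall>i. 0 \<le> t i \<and> t i \<le> 1"
    and hlimsup: "limsup (\<lambda>i. ereal (t i)) < 1"
    and hF: "F = (\<lambda>x i. if i = 0 then (\<Sum>k. f k * x k) else 0)"
    and hT: "T = (\<lambda>x i. if i = 0 then 0 else t (i - 1) * x (i - 1))"
    and hA: "A = (\<lambda>x i. T x i + F x i)"
  shows "bounded_lp_op p F \<and> preserves_cone p F \<and>
         (let R0 = spectral_radius p (F \<circ> the_inv_into (lp_space p) (\<lambda>x i. x i - T x i))
          in summable (\<lambda>i. f i * (\<Prod>j<i. t j)) \<and>
             R0 = (\<Sum>i. f i * (\<Prod>j<i. t j)) \<and>
             ((R0 \<ge> spectral_radius p A \<and> spectral_radius p A > 1) \<or>
              (R0 = 1 \<and> spectral_radius p A = 1) \<or>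
              (R0 \<le> spectral_radius p A \<and> spectral_radius p A < 1)))"
proof -
  obtain c N where "0 < c" "c < 1" "\<And>j. N \<le> j \<Longrightarrow> t j \<le> c"
    using limsup_less_1_imp_eventually_le[OF hlimsup] by blast
  then interpret shift_rank_one p t c N q f
    using hp hq hf hfpos ht by unfold_locales auto
  have ops: "F = F_op" "T = T_op" "A = A_op"
    using hF hT hA by (simp_all add: fun_eq_iff F_op_def T_op_def A_op_def)
  have coef: "(\<lambda>i. f i * (\<Prod>j<i. t j)) = coef"
    by (simp add: fun_eq_iff coef_def)
  have G: "F \<circ> the_inv_into (lp_space p) (\<lambda>x i. x i - T x i) = G_op"
    by (simp add: ops G_op_def)
  show ?thesis
    unfolding Let_def G spectral_radius_G_op coef
    using bounded_lp_op_F_op preserves_cone_F_op summable_coef spectral_radius_A_trichotomy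
    by (simp add: ops R0_def)
qed

end
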